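(* Let $\alpha,\beta\in\mathbb C$ be the two roots of $x^2-(1+\sqrt{-1})x+1=0$, let $\Gamma:=\mathrm{span}_{\mathbb Z}\{(1,1),(\alpha,\bar\beta),(\alpha^2,\bar\beta^2),(\alpha^3,\bar\beta^3)\}\subset\mathbb C^2$, and let $X:=\mathbb C^2/\Gamma$ (a complex $2$-torus). Let $f\colon X\to X$ be the automorphism induced by $(z_1,z_2)\mapsto(\alpha z_1,\bar\beta z_2)$. Let $\tau\in\mathbb C$ with $\mathrm{Im}\,\tau>0$ and let $M:=(X\times\mathbb C)/\mathbb Z^2$, where $(\ell,m)\in\mathbb Z^2$ acts by $(\ell,m)\cdot(z,w):=(f^m(z),\,w+\ell+m\tau)$; $M$ is a compact complex $3$-fold, the total space of a holomorphic fibre bundle over the elliptic curve $\mathbb C/(\mathbb Z\oplus\tau\mathbb Z)$ with fibre $X$. Then the K\"ahler rank of $M$ equals $1$.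
   Context: The K\"ahler rank of a compact complex manifold $Y$ is $\mathrm{Kr}(Y):=\max\{k\in\mathbb N: \exists$ a real $(1,1)$-form $\omega\geq0$ (non-negative) with $d\omega=0$ and $\omega^k$ not identically zero$\}$. *)

theory Defs
  imports "HOL-Analysis.Analysis"
begin

text \<open>Points of the universal cover C^2 x C = C^3 of M; coordinates (z1, z2, w)
  are the components with indices 1, 2, 3 of type 3.\<close>

type_synonym pt = "complex^3"

definition vec3 :: "complex \<Rightarrow> complex \<Rightarrow> complex \<Rightarrow> pt" where
  "vec3 a b c = (\<chi> i. if i = 1 then a else if i = 2 then b else c)"

text \<open>Real C-infinity smoothness (all iterated real directional derivatives exist
  everywhere; differentiability gives continuity of all of them).\<close>

coinductive smooth3 :: "(pt \<Rightarrow> complex) \<Rightarrow> bool" where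
  "(\<forall>x. f differentiable (at x)) \<Longrightarrow>
   (\<forall>v. smooth3 (\<lambda>x. frechet_derivative f (at x) v)) \<Longrightarrow> smooth3 f"

definition dirderiv :: "(pt \<Rightarrow> complex) \<Rightarrow> pt \<Rightarrow> pt \<Rightarrow> complex" where
  "dirderiv f v x = frechet_derivative f (at x) v"

definition wirt :: "(pt \<Rightarrow> complex) \<Rightarrow> 3 \<Rightarrow> pt \<Rightarrow> complex" where
  "wirt f l x = (dirderiv f (axis l 1) x - \<i> * dirderiv f (axis l \<i>) x) / 2"

definition wirtbar :: "(pt \<Rightarrow> complex) \<Rightarrow> 3 \<Rightarrow> pt \<Rightarrow> complex" where
  "wirtbar f l x = (dirderiv f (axis l 1) x + \<i> * dirderiv f (axis l \<i>) x) / 2"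

text \<open>A real (1,1)-form on C^3 is written
  omega = i * sum_{j,k} h_{jk} dz_j /\ d(conj z_k), with h(p) a Hermitian matrix.\<close>

definition real11 :: "(pt \<Rightarrow> complex^3^3) \<Rightarrow> bool" where
  "real11 h \<longleftrightarrow> (\<forall>j k. smooth3 (\<lambda>p. h p $ j $ k)) \<and>
                 (\<forall>p j k. h p $ j $ k = cnj (h p $ k $ j))"

definition nonneg11 :: "(pt \<Rightarrow> complex^3^3) \<Rightarrow> bool" where
  "nonneg11 h \<longleftrightarrow> (\<forall>p (v::complex^3).
     0 \<le> Re (\<Sum>j\<in>UNIV. \<Sum>k\<in>UNIV. h p $ j $ k * v $ j * cnj (v $ k)))"

text \<open>d omega = 0: vanishing of the (2,1) and (1,2) parts.\<close>

definition closed11 :: "(pt \<Rightarrow> complex^3^3) \<Rightarrow> bool" where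
  "closed11 h \<longleftrightarrow>
     (\<forall>p j k l. wirt (\<lambda>q. h q $ j $ k) l p = wirt (\<lambda>q. h q $ l $ k) j p) \<and>
     (\<forall>p j k l. wirtbar (\<lambda>q. h q $ j $ k) l p = wirtbar (\<lambda>q. h q $ j $ l) k p)"

text \<open>The deck group of C^3 -> M:
  translations by Gamma x {0}, the translation w |-> w + 1, and
  g(z1,z2,w) = (alpha z1, conj beta z2, w + tau).  A form on C^3 descends to M iff it is
  invariant under these generators; for the linear part of g with diagonal lam the
  pullback condition is h(g p)_{jk} lam_j conj(lam_k) = h(p)_{jk}.\<close>

definition Gamma :: "complex \<Rightarrow> complex \<Rightarrow> (complex \<times> complex) set" where
  "Gamma \<alpha> \<beta> = {(of_int n0 + of_int n1 * \<alpha> + of_int n2 * \<alpha>^2 + of_int n3 * \<alpha>^3,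
                   of_int n0 + of_int n1 * cnj \<beta> + of_int n2 * (cnj \<beta>)^2 + of_int n3 * (cnj \<beta>)^3)
                 | n0 n1 n2 n3 :: int. True}"

definition invariant11 :: "complex \<Rightarrow> complex \<Rightarrow> complex \<Rightarrow> (pt \<Rightarrow> complex^3^3) \<Rightarrow> bool" where
  "invariant11 \<alpha> \<beta> \<tau> h \<longleftrightarrow>
     (\<forall>(a,b)\<in>Gamma \<alpha> \<beta>. \<forall>p. h (p + vec3 a b 0) = h p) \<and>
     (\<forall>p. h (p + vec3 0 0 1) = h p) \<and>
     (let lam = vec3 \<alpha> (cnj \<beta>) 1 in
       \<forall>p j k. h (vec3 (\<alpha> * p $ 1) (cnj \<beta> * p $ 2) (p $ 3 + \<tau>)) $ j $ k
                 * lam $ j * cnj (lam $ k) = h p $ j $ k)"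

text \<open>omega^k = k! i^k sum_{|I|=|J|=k} (+-) det(h_{IJ}) dz_I /\ d(conj z_J), so
  omega^k is not identically zero iff some k x k minor of h is nonzero somewhere.\<close>

definition minor :: "complex^3^3 \<Rightarrow> 3 list \<Rightarrow> 3 list \<Rightarrow> complex" where
  "minor A I J = (\<Sum>\<sigma> | \<sigma> permutes {..<length I}.
       of_int (sign \<sigma>) * (\<Prod>a<length I. A $ (I ! a) $ (J ! \<sigma> a)))"

definition wedge_pow_nonzero :: "(pt \<Rightarrow> complex^3^3) \<Rightarrow> nat \<Rightarrow> bool" where
  "wedge_pow_nonzero h k \<longleftrightarrow> (\<exists>p I J. distinct I \<and> distinct J \<and> length I = k \<and>
       length J = k \<and> minor (h p) I J \<noteq> 0)"

definition kahler_rank_M :: "complex \<Rightarrow> complex \<Rightarrow> complex \<Rightarrow> nat" where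
  "kahler_rank_M \<alpha> \<beta> \<tau> = Max {k. \<exists>h. real11 h \<and> nonneg11 h \<and> closed11 h \<and>
        invariant11 \<alpha> \<beta> \<tau> h \<and> wedge_pow_nonzero h k}"

end

theory Submission
  imports Defs
begin

text \<open>A closed semipositive (1,1)-form on M lifts to a Hermitian matrix h of smooth functions
  on C^3 that is invariant under the deck group. For j = 1, 2 let I(w) be the integral of h_jj
  over the torus fibre over w. Closedness expresses the w-derivatives of h_jj through
  z_j-derivatives of h_3j and h_j3, whose fibre integrals vanish by periodicity, so
  I(w + \<tau>) = I(w). The generator (z1, z2, w) \<mapsto> (\<alpha> z1, cnj \<beta> z2, w + \<tau>) acts on
  \<Gamma> by a unimodular integer matrix, hence preserves fibre integrals, while it rescales
  h_11 and h_22 by |\<alpha>|^2 \<noteq> 1 and |\<beta>|^2 \<noteq> 1. So I vanishes, the non-negative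
  function h_jj vanishes, and by semipositivity so do the rows 1 and 2 of h: every 2 x 2 minor
  is zero. The form i dw \<and> d(cnj w) shows that the rank is exactly 1.\<close>

section \<open>Periodic functions on the unit cube\<close>

definition unit_periodic :: "('a::euclidean_space \<Rightarrow> 'b) \<Rightarrow> bool" where
  "unit_periodic P \<longleftrightarrow> (\<forall>x. \<forall>b\<in>Basis. P (x + b) = P x)"

lemma unit_periodic_real_iff: "unit_periodic (P :: real \<Rightarrow> 'b) \<longleftrightarrow> (\<forall>x. P (x + 1) = P x)"
  by (simp add: unit_periodic_def)

lemma unit_periodic_prodD:
  assumes "unit_periodic (P :: real \<times> 'a::euclidean_space \<Rightarrow> 'b)"
  shows "unit_periodic (\<lambda>x. P (x, y))" "unit_periodic (\<lambda>y. P (x, y))"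
  using assms by (auto simp: unit_periodic_def Basis_prod_def dest!: spec[of _ "(_, _)"])

lemma periodic_add_of_int:
  assumes per: "\<And>x. P (x + 1) = P x"
  shows "P (x + real_of_int n) = P x"
proof -
  have nat: "P (y + real m) = P y" for y m
    by (induction m arbitrary: y) (auto simp: add.assoc[symmetric] per)
  show ?thesis
  proof (cases "n \<ge> 0")
    case True
    then show ?thesis using nat[of x "nat n"] by simp
  next
    case False
    then show ?thesis using nat[of "x + real_of_int n" "nat (- n)"] by simp
  qed
qed

lemma integral_unit_interval_shift:
  fixes P :: "real \<Rightarrow> 'b::banach"
  assumes cont: "continuous_on UNIV P" and per: "\<And>x. P (x + 1) = P x"
  shows "integral {0..1} (\<lambda>x. P (x + c)) = integral {0..1} P"
proof -
  define r where "r = frac c"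
  have r: "0 \<le> r" "r < 1" by (simp_all add: r_def frac_lt_1)
  have "P (x + c) = P (x + r)" for x
    using periodic_add_of_int[of P, OF per, of "x + r" "\<lfloor>c\<rfloor>"] by (simp add: r_def frac_def)
  then have "integral {0..1} (\<lambda>x. P (x + c)) = integral {r..1+r} P"
    using integral_shift_real_ivl[of r r "1+r" P] by simp
  also have "\<dots> = integral {r..1} P + integral {1..1+r} P"
    using r cont by (intro Henstock_Kurzweil_Integration.integral_combine[symmetric]
      integrable_continuous_interval) (auto intro: continuous_on_subset)
  also have "integral {1..1+r} P = integral {0..r} P"
    using integral_shift_real_ivl[of 1 1 "1+r" P] per by (simp add: add.commute)
  also have "integral {r..1} P + integral {0..r} P = integral {0..1} P"
    using r cont by (subst add.commute, intro Henstock_Kurzweil_Integration.integral_combine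
      integrable_continuous_interval) (auto intro: continuous_on_subset)
  finally show ?thesis .
qed

lemma integral_unit_interval_reflect:
  fixes P :: "real \<Rightarrow> 'b::banach"
  assumes "continuous_on UNIV P" and "\<And>x. P (x + 1) = P x"
  shows "integral {0..1} (\<lambda>x. P (- x)) = integral {0..1} P"
proof -
  have "integral {0..1} (\<lambda>x. P (- x)) = integral {0..1} (\<lambda>x. P (x + -1))"
    using Henstock_Kurzweil_Integration.integral_reflect_real[of 0 "-1" P]
      integral_shift_real_ivl[of "-1" "-1" 0 P] by simp
  also have "\<dots> = integral {0..1} P"
    by (rule integral_unit_interval_shift[OF assms])
  finally show ?thesis .
qed

lemma One_prod: "(One :: 'a::euclidean_space \<times> 'b::euclidean_space) = (One, One)"
  using sum_Basis_prod_eq[of "\<lambda>x. x"] by (simp add: prod_eq_iff fst_sum snd_sum)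

lemma cbox_unit_prod: "cbox (0 :: real \<times> 'a::euclidean_space) One = cbox (0, 0) (1, One)"
  by (simp add: zero_prod_def One_prod)

lemma integral_unit_cube_shift_real:
  fixes Q :: "real \<Rightarrow> 'b::banach"
  assumes "continuous_on UNIV Q" "unit_periodic Q"
  shows "integral (cbox 0 One) (\<lambda>x. Q (x + c)) = integral (cbox 0 One) Q"
  using integral_unit_interval_shift[of Q c] assms by (simp add: unit_periodic_real_iff)

lemma continuous_on_compose_pair:
  assumes "continuous_on UNIV P"
  shows "continuous_on UNIV (\<lambda>y. P (x, y))" "continuous_on UNIV (\<lambda>x. P (x, y))"
  by (auto intro!: continuous_on_compose2[OF assms] continuous_intros)

lemma integral_unit_cube_prod_swap:
  fixes P :: "real \<times> 'a::euclidean_space \<Rightarrow> 'b::banach"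
  assumes "continuous_on UNIV P"
  shows "integral (cbox 0 One) P = integral (cbox 0 One) (\<lambda>y. integral {0..1} (\<lambda>x. P (x, y)))"
proof -
  have cont: "continuous_on (cbox (0, 0) (1, One)) (\<lambda>(x, y). P (x, y))"
    using continuous_on_subset[OF assms subset_UNIV] by (simp add: split_beta')
  have "integral (cbox 0 One) P = integral (cbox 0 1) (\<lambda>x. integral (cbox 0 One) (\<lambda>y. P (x, y)))"
    using integral_prod_continuous[OF cont] by (simp add: cbox_unit_prod split_beta')
  also have "\<dots> = integral (cbox 0 One) (\<lambda>y. integral (cbox 0 1) (\<lambda>x. P (x, y)))"
    by (rule integral_swap_continuous[OF cont])
  finally show ?thesis by simp
qed

lemma integral_unit_cube_shift_prod:
  fixes P :: "real \<times> 'a::euclidean_space \<Rightarrow> 'b::banach"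
  assumes shift: "\<And>(Q :: 'a \<Rightarrow> 'b) c. continuous_on UNIV Q \<Longrightarrow> unit_periodic Q \<Longrightarrow>
      integral (cbox 0 One) (\<lambda>x. Q (x + c)) = integral (cbox (0::'a) One) Q"
    and cont: "continuous_on UNIV P" and per: "unit_periodic P"
  shows "integral (cbox 0 One) (\<lambda>x. P (x + c)) = integral (cbox 0 One) P"
proof -
  obtain c1 c2 where c: "c = (c1, c2)" by force
  have "continuous_on UNIV (\<lambda>x. P (x + c))"
    by (auto intro!: continuous_on_compose2[OF cont] continuous_intros)
  then have "integral (cbox 0 One) (\<lambda>x. P (x + c))
      = integral (cbox 0 One) (\<lambda>y. integral {0..1} (\<lambda>x. P (x + c1, y + c2)))"
    by (simp add: integral_unit_cube_prod_swap c)
  also have "\<dots> = integral (cbox 0 One) (\<lambda>y. integral {0..1} (\<lambda>x. P (x, y + c2)))"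
  proof -
    have "integral {0..1} (\<lambda>x. P (x + c1, y)) = integral {0..1} (\<lambda>x. P (x, y))" for y
      using unit_periodic_prodD(1)[OF per] continuous_on_compose_pair(2)[OF cont]
      by (intro integral_unit_interval_shift) (auto simp: unit_periodic_real_iff)
    then show ?thesis by simp
  qed
  also have "\<dots> = integral (cbox 0 One) (\<lambda>y. integral {0..1} (\<lambda>x. P (x, y)))"
  proof (rule shift[where Q = "\<lambda>y. integral {0..1} (\<lambda>x. P (x, y))"])
    have "continuous_on (UNIV \<times> cbox 0 1) (\<lambda>(y, x). P (x, y))"
      by (auto intro!: continuous_on_compose2[OF cont] continuous_intros simp: split_beta)
    then show "continuous_on UNIV (\<lambda>y. integral {0..1} (\<lambda>x. P (x, y)))"
      using integral_continuous_on_param[of UNIV 0 1 "\<lambda>y x. P (x, y)"] by simp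
    show "unit_periodic (\<lambda>y. integral {0..1} (\<lambda>x. P (x, y)))"
      using unit_periodic_prodD(2)[OF per] by (simp add: unit_periodic_def)
  qed
  also have "\<dots> = integral (cbox 0 One) P"
    by (simp add: integral_unit_cube_prod_swap[OF cont])
  finally show ?thesis .
qed

lemma integral_unit_cube_shift_R3:
  fixes Q :: "real \<times> real \<times> real \<Rightarrow> 'b::banach"
  assumes "continuous_on UNIV Q" "unit_periodic Q"
  shows "integral (cbox 0 One) (\<lambda>x. Q (x + c)) = integral (cbox 0 One) Q"
  by (intro integral_unit_cube_shift_prod integral_unit_cube_shift_real assms)

type_synonym R4 = "real \<times> real \<times> real \<times> real"

lemma integral_unit_cube_shift_R4:
  fixes Q :: "R4 \<Rightarrow> 'b::banach"
  assumes "continuous_on UNIV Q" "unit_periodic Q"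
  shows "integral (cbox 0 One) (\<lambda>x. Q (x + c)) = integral (cbox 0 One) Q"
  by (intro integral_unit_cube_shift_prod integral_unit_cube_shift_R3 assms)

lemma integral_unit_cube_prod:
  fixes P :: "real \<times> 'a::euclidean_space \<Rightarrow> 'b::banach"
  assumes "continuous_on UNIV P"
  shows "integral (cbox 0 One) P = integral {0..1} (\<lambda>x. integral (cbox 0 One) (\<lambda>y. P (x, y)))"
  using integral_prod_continuous[of 0 0 1 One P] continuous_on_subset[OF assms subset_UNIV]
  by (simp add: cbox_unit_prod)

lemma integral_unit_cube_shear:
  fixes Q :: "real \<times> 'a::euclidean_space \<Rightarrow> 'b::banach"
  assumes shift: "\<And>(Q :: 'a \<Rightarrow> 'b) c. continuous_on UNIV Q \<Longrightarrow> unit_periodic Q \<Longrightarrow>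
      integral (cbox 0 One) (\<lambda>x. Q (x + c)) = integral (cbox (0::'a) One) Q"
    and cont: "continuous_on UNIV Q" and per: "unit_periodic Q"
  shows "integral (cbox 0 One) (\<lambda>x. Q (- fst x, snd x + fst x *\<^sub>R c)) = integral (cbox 0 One) Q"
proof -
  have "continuous_on UNIV (\<lambda>x. Q (- fst x, snd x + fst x *\<^sub>R c))"
    by (auto intro!: continuous_on_compose2[OF cont] continuous_intros)
  then have "integral (cbox 0 One) (\<lambda>x. Q (- fst x, snd x + fst x *\<^sub>R c))
      = integral {0..1} (\<lambda>d. integral (cbox 0 One) (\<lambda>r. Q (- d, r + d *\<^sub>R c)))"
    by (simp add: integral_unit_cube_prod)
  also have "\<dots> = integral {0..1} (\<lambda>d. integral (cbox 0 One) (\<lambda>r. Q (- d, r)))"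
  proof -
    have "integral (cbox 0 One) (\<lambda>r. Q (d, r + e)) = integral (cbox 0 One) (\<lambda>r. Q (d, r))" for d e
      using unit_periodic_prodD(2)[OF per] continuous_on_compose_pair(1)[OF cont]
      by (intro shift)
    then show ?thesis by simp
  qed
  also have "\<dots> = integral (cbox 0 One) (\<lambda>r. integral {0..1} (\<lambda>d. Q (- d, r)))"
  proof -
    have "continuous_on UNIV (\<lambda>x. Q (- fst x, snd x))"
      by (auto intro!: continuous_on_compose2[OF cont] continuous_intros)
    then show ?thesis
      using integral_unit_cube_prod integral_unit_cube_prod_swap by fastforce
  qed
  also have "\<dots> = integral (cbox 0 One) (\<lambda>r. integral {0..1} (\<lambda>d. Q (d, r)))"
  proof -
    have "integral {0..1} (\<lambda>d. Q (- d, r)) = integral {0..1} (\<lambda>d. Q (d, r))" for r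
      using unit_periodic_prodD(1)[OF per] continuous_on_compose_pair(2)[OF cont]
      by (intro integral_unit_interval_reflect) (auto simp: unit_periodic_real_iff)
    then show ?thesis by simp
  qed
  also have "\<dots> = integral (cbox 0 One) Q"
    by (simp add: integral_unit_cube_prod_swap[OF cont])
  finally show ?thesis .
qed

lemma nonneg_periodic_integral_eq_0_imp_eq_0:
  fixes f :: "R4 \<Rightarrow> real"
  assumes cont: "continuous_on UNIV f" and per: "unit_periodic f" and nonneg: "\<And>t. 0 \<le> f t"
    and int: "integral (cbox 0 One) f = 0"
  shows "f c = 0"
proof -
  have cont_c: "continuous_on UNIV (\<lambda>t. f (t + c))"
    by (auto intro!: continuous_on_compose2[OF cont] continuous_intros)
  have "integral (cbox 0 One) (\<lambda>t. f (t + c)) = 0"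
    using integral_unit_cube_shift_R4[OF cont per] int by simp
  moreover have "(\<lambda>t. f (t + c)) integrable_on cbox 0 One"
    by (rule integrable_continuous[OF continuous_on_subset[OF cont_c subset_UNIV]])
  ultimately have "((\<lambda>t. f (t + c)) has_integral 0) (cbox 0 One)"
    using has_integral_integral by metis
  then have "(\<lambda>t. f (t + c)) 0 = 0"
    using has_integral_0_cbox_imp_0[where a = 0 and b = One and f = "\<lambda>t. f (t + c)" and x = 0]
      continuous_on_subset[OF cont_c subset_UNIV] nonneg by (simp add: mem_box)
  then show ?thesis
    by simp
qed

definition rotate4 :: "R4 \<Rightarrow> R4" where
  "rotate4 = (\<lambda>(a, b, c, d). (d, a, b, c))"

definition unrotate4 :: "R4 \<Rightarrow> R4" where
  "unrotate4 = (\<lambda>(a, b, c, d). (b, c, d, a))"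

lemma rotate4_cbox: "rotate4 ` cbox u v = cbox (rotate4 u) (rotate4 v)"
  and unrotate4_cbox: "unrotate4 ` cbox u v = cbox (unrotate4 u) (unrotate4 v)"
  by (cases u, cases v, auto simp: rotate4_def unrotate4_def cbox_Pair_eq image_iff)+

lemma integral_unit_cube_rotate4:
  fixes Q :: "R4 \<Rightarrow> 'b::banach"
  assumes "continuous_on UNIV Q"
  shows "integral (cbox 0 One) (\<lambda>x. Q (rotate4 x)) = integral (cbox 0 One) Q"
proof -
  have "(Q has_integral integral (cbox 0 One) Q) (cbox 0 One)"
    using assms
    by (intro integrable_integral integrable_continuous) (auto intro: continuous_on_subset)
  then have "((\<lambda>x. Q (rotate4 x)) has_integral (1 / 1) *\<^sub>R integral (cbox 0 One) Q)
      (unrotate4 ` cbox 0 One)"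
  proof (rule has_integral_twiddle[where g = rotate4 and h = unrotate4, rotated -1])
    show "continuous (at x) rotate4" for x
      unfolding rotate4_def split_beta by (intro continuous_intros)
    show "Henstock_Kurzweil_Integration.content (rotate4 ` cbox u v)
        = 1 * Henstock_Kurzweil_Integration.content (cbox u v)" for u v
      unfolding rotate4_cbox
      by (cases u, cases v) (simp add: rotate4_def content_Pair mult_ac del: content_real_if)
    show "\<exists>w z. rotate4 ` cbox u v = cbox w z" "\<exists>w z. unrotate4 ` cbox u v = cbox w z" for u v
      using rotate4_cbox unrotate4_cbox by blast+
  qed (auto simp: rotate4_def unrotate4_def)
  moreover have "unrotate4 ` cbox 0 One = cbox 0 One"
    unfolding unrotate4_cbox by (simp add: unrotate4_def One_prod zero_prod_def)
  ultimately show ?thesis by (simp add: integral_unique)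
qed

section \<open>The lattice\<close>

definition power_comb :: "complex \<Rightarrow> R4 \<Rightarrow> complex" where
  "power_comb x =
    (\<lambda>(t0, t1, t2, t3). of_real t0 + of_real t1 * x + of_real t2 * x^2 + of_real t3 * x^3)"

lemma power_comb_add: "power_comb x (s + t) = power_comb x s + power_comb x t"
  and power_comb_scaleR: "power_comb x (r *\<^sub>R t) = of_real r * power_comb x t"
  and power_comb_cnj: "cnj (power_comb x t) = power_comb (cnj x) t"
  by (auto simp: power_comb_def split_beta algebra_simps)

text \<open>Multiplication by \<alpha> and by cnj \<beta> in the coordinates of power_comb: the companion
  matrix of x^4 - 2x^3 + 4x^2 - 2x + 1 = (x^2 - (1 + i)x + 1)(x^2 - (1 - i)x + 1).\<close>

definition companion4 :: "R4 \<Rightarrow> R4" where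
  "companion4 = (\<lambda>(a, b, c, d). (- d, a + 2 * d, b - 4 * d, c + 2 * d))"

lemma companion4_eq_shear_rotate4:
  "companion4 t = (- fst (rotate4 t), snd (rotate4 t) + fst (rotate4 t) *\<^sub>R (2, -4, 2))"
  by (simp add: companion4_def rotate4_def split_beta)

lemma integral_unit_cube_companion4:
  fixes Q :: "R4 \<Rightarrow> 'b::banach"
  assumes cont: "continuous_on UNIV Q" and per: "unit_periodic Q"
  shows "integral (cbox 0 One) (\<lambda>x. Q (companion4 x)) = integral (cbox 0 One) Q"
proof -
  define S where "S x = Q (- fst x, snd x + fst x *\<^sub>R (2, -4, 2))" for x :: R4
  have "continuous_on UNIV S"
    unfolding S_def by (auto intro!: continuous_on_compose2[OF cont] continuous_intros)
  then have "integral (cbox 0 One) (\<lambda>x. S (rotate4 x)) = integral (cbox 0 One) S"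
    by (rule integral_unit_cube_rotate4)
  also have "\<dots> = integral (cbox 0 One) Q"
    unfolding S_def by (rule integral_unit_cube_shear[OF integral_unit_cube_shift_R3 cont per])
  finally show ?thesis
    by (simp add: S_def companion4_eq_shear_rotate4)
qed

lemma power_comb_companion4:
  assumes "x^4 = 2 * x^3 - 4 * x^2 + 2 * x - 1"
  shows "x * power_comb x t = power_comb (x::complex) (companion4 t)"
proof -
  have "x * power_comb x t = of_real (fst t) * x + of_real (fst (snd t)) * x^2
      + of_real (fst (snd (snd t))) * x^3 + of_real (snd (snd (snd t))) * x^4"
    by (simp add: power_comb_def split_beta algebra_simps power2_eq_square power3_eq_cube
        power4_eq_xxxx)
  then show ?thesis
    by (simp add: assms power_comb_def companion4_def split_beta algebra_simps)
qed

lemma cubic_eq_0_at_four_points: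
  fixes a b c d t0 t1 t2 t3 :: complex
  assumes "distinct [a, b, c, d]"
    and "\<forall>x\<in>{a, b, c, d}. t0 + t1 * x + t2 * x^2 + t3 * x^3 = 0"
  shows "t0 = 0 \<and> t1 = 0 \<and> t2 = 0 \<and> t3 = 0"
proof -
  define P where "P x = t0 + t1 * x + t2 * x^2 + t3 * x^3" for x
  define Q where "Q x y = t1 + t2 * (x + y) + t3 * (x^2 + x * y + y^2)" for x y
  define R where "R x y z = t2 + t3 * (x + y + z)" for x y z
  have P_diff: "P x - P y = (x - y) * Q x y" for x y
    by (simp add: P_def Q_def algebra_simps power2_eq_square power3_eq_cube)
  have Q_diff: "Q x y - Q x z = (y - z) * R x y z" for x y z
    by (simp add: Q_def R_def algebra_simps power2_eq_square)
  have "P a = 0" "P b = 0" "P c = 0" "P d = 0"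
    using assms(2) by (simp_all add: P_def)
  then have "Q a b = 0" "Q a c = 0" "Q a d = 0"
    using P_diff[of a b] P_diff[of a c] P_diff[of a d] assms(1) by auto
  then have "R a b c = 0" "R a b d = 0"
    using Q_diff[of a b c] Q_diff[of a b d] assms(1) by auto
  moreover have "R a b c - R a b d = t3 * (c - d)"
    by (simp add: R_def algebra_simps)
  ultimately have "t3 = 0"
    using assms by simp
  then show ?thesis
    using \<open>R a b c = 0\<close> \<open>Q a b = 0\<close> \<open>P a = 0\<close> by (simp add: R_def Q_def P_def)
qed

lemma vec3_nth [simp]: "vec3 a b c $ 1 = a" "vec3 a b c $ 2 = b" "vec3 a b c $ 3 = c"
  by (simp_all add: vec3_def)

lemma vec3_add: "vec3 a b c + vec3 a' b' c' = vec3 (a + a') (b + b') (c + c')"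
  by (simp add: vec_eq_iff vec3_def)

lemma vec3_scaleR: "r *\<^sub>R vec3 a b c = vec3 (of_real r * a) (of_real r * b) (of_real r * c)"
  by (simp add: vec_eq_iff vec3_def) (simp add: scaleR_conv_of_real)

lemma vec3_eta: "vec3 (p $ 1) (p $ 2) (p $ 3) = p"
  by (simp add: vec_eq_iff vec3_def) (metis exhaust_3)

lemma axis_eq_vec3: "axis 1 c = vec3 c 0 0" "axis 2 c = vec3 0 c 0" "axis 3 c = vec3 0 0 c"
  unfolding vec_eq_iff vec3_def axis_def using exhaust_3 by auto

definition lattice_map :: "complex \<Rightarrow> complex \<Rightarrow> R4 \<Rightarrow> pt" where
  "lattice_map a b t = vec3 (power_comb a t) (power_comb b t) 0"

lemma linear_lattice_map: "linear (lattice_map a b)"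
  by (rule linearI)
    (simp_all add: lattice_map_def power_comb_add power_comb_scaleR vec3_add vec3_scaleR)

definition Gamma_periodic :: "complex \<Rightarrow> complex \<Rightarrow> (pt \<Rightarrow> 'a) \<Rightarrow> bool" where
  "Gamma_periodic a b F \<longleftrightarrow> (\<forall>(x, y)\<in>Gamma a b. \<forall>p. F (p + vec3 x y 0) = F p)"

lemma Gamma_periodic_lattice_map_Basis:
  assumes "Gamma_periodic a b F" and "e \<in> Basis"
  shows "F (p + lattice_map a (cnj b) e) = F p"
proof -
  obtain n0 n1 n2 n3 :: int where "e = (of_int n0, of_int n1, of_int n2, of_int n3)"
    using \<open>e \<in> Basis\<close> unfolding Basis_prod_def
    by (auto intro: exI[of _ 0] exI[of _ 1] simp: zero_prod_def)
  then have "(power_comb a e, power_comb (cnj b) e) \<in> Gamma a b"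
    by (auto simp: Gamma_def power_comb_def)
  with assms(1) show ?thesis
    by (auto simp: Gamma_periodic_def lattice_map_def)
qed

lemma continuous_on_lattice_map_comp:
  assumes "continuous_on UNIV u"
  shows "continuous_on UNIV (\<lambda>t. u (p + lattice_map a b t))"
proof -
  have "continuous_on UNIV (lattice_map a b)"
    using linear_lattice_map by (simp add: linear_continuous_on linear_conv_bounded_linear)
  then show ?thesis
    by (auto intro!: continuous_on_compose2[OF assms] continuous_intros)
qed

lemma unit_periodic_lattice_map_comp:
  assumes "Gamma_periodic a b u"
  shows "unit_periodic (\<lambda>t. u (p + lattice_map a (cnj b) t))"
  unfolding unit_periodic_def linear_add[OF linear_lattice_map] add.assoc[symmetric]
  using Gamma_periodic_lattice_map_Basis[OF assms] by blast

lemma not_real_root: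
  assumes "z^2 - (1 + \<i>) * z + 1 = 0"
  shows "cnj z \<noteq> z"
proof
  assume "cnj z = z"
  then obtain r where "z = of_real r"
    by (metis Reals_cnj_iff Reals_cases)
  with assms have "(r^2 - r + 1) + \<i> * (- r) = 0"
    by (simp add: algebra_simps)
  then show False
    by (auto simp: complex_eq_iff)
qed

locale root_pair =
  fixes \<alpha> \<beta> :: complex
  assumes root_\<alpha>: "\<alpha>^2 - (1 + \<i>) * \<alpha> + 1 = 0"
    and root_\<beta>: "\<beta>^2 - (1 + \<i>) * \<beta> + 1 = 0"
    and roots_neq: "\<alpha> \<noteq> \<beta>"
begin

abbreviation lat :: "R4 \<Rightarrow> pt" where
  "lat \<equiv> lattice_map \<alpha> (cnj \<beta>)"

lemma sum_roots: "\<alpha> + \<beta> = 1 + \<i>"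
proof -
  have "(\<alpha> - \<beta>) * (\<alpha> + \<beta> - (1 + \<i>))
      = (\<alpha>^2 - (1 + \<i>) * \<alpha> + 1) - (\<beta>^2 - (1 + \<i>) * \<beta> + 1)"
    by (simp add: algebra_simps power2_eq_square)
  then have "(\<alpha> - \<beta>) * (\<alpha> + \<beta> - (1 + \<i>)) = 0"
    using root_\<alpha> root_\<beta> by simp
  then show ?thesis
    using roots_neq by simp
qed

lemma prod_roots: "\<alpha> * \<beta> = 1"
proof -
  have "\<alpha>^2 - (\<alpha> + \<beta>) * \<alpha> + 1 = 0"
    using root_\<alpha> sum_roots by simp
  then show ?thesis
    by (simp add: algebra_simps power2_eq_square)
qed

lemma roots_distinct: "distinct [\<alpha>, \<beta>, cnj \<alpha>, cnj \<beta>]"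
proof -
  have "Im (\<alpha> + \<beta>) \<noteq> 0"
    using sum_roots by simp
  then have "\<alpha> \<noteq> cnj \<beta>" "\<beta> \<noteq> cnj \<alpha>"
    by auto
  then show ?thesis
    using roots_neq not_real_root[OF root_\<alpha>] not_real_root[OF root_\<beta>] by auto
qed

lemma roots_quartic:
  assumes "x \<in> {\<alpha>, \<beta>, cnj \<alpha>, cnj \<beta>}"
  shows "x^4 = 2 * x^3 - 4 * x^2 + 2 * x - 1"
proof -
  have "x^4 - (2 * x^3 - 4 * x^2 + 2 * x - 1) = (x^2 - (1 + \<i>) * x + 1) * (x^2 - (1 - \<i>) * x + 1)"
    by (simp add: algebra_simps power2_eq_square power3_eq_cube power4_eq_xxxx complex_eq_iff)
  moreover have "x^2 - (1 + \<i>) * x + 1 = 0 \<or> x^2 - (1 - \<i>) * x + 1 = 0"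
  proof -
    have cnj_root: "(cnj z)^2 - (1 - \<i>) * cnj z + 1 = 0" if "z^2 - (1 + \<i>) * z + 1 = 0" for z
      using arg_cong[OF that, of cnj] by simp
    show ?thesis
      using assms root_\<alpha> root_\<beta> cnj_root[OF root_\<alpha>] cnj_root[OF root_\<beta>] by blast
  qed
  ultimately show ?thesis
    by auto
qed

lemma root_mult_cnj_neq_1: "\<alpha> * cnj \<alpha> \<noteq> 1" "\<beta> * cnj \<beta> \<noteq> 1"
proof -
  have "\<alpha> \<noteq> 0" "\<beta> \<noteq> 0" "\<beta> \<noteq> cnj \<alpha>" "\<alpha> \<noteq> cnj \<beta>"
    using prod_roots roots_distinct by auto
  then show "\<alpha> * cnj \<alpha> \<noteq> 1" "\<beta> * cnj \<beta> \<noteq> 1"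
    using prod_roots by (metis mult.commute mult_left_cancel)+
qed

lemma lattice_map_surj: "\<exists>t. lat t = vec3 x y 0"
proof -
  define E where "E t = (Re (power_comb \<alpha> t), Im (power_comb \<alpha> t),
    Re (power_comb (cnj \<beta>) t), Im (power_comb (cnj \<beta>) t))" for t
  have lin: "linear E"
    by (rule linearI) (simp_all add: E_def power_comb_add power_comb_scaleR)
  have "t = 0" if "E t = 0" for t
  proof -
    have "power_comb \<alpha> t = 0" "power_comb (cnj \<beta>) t = 0"
      using \<open>E t = 0\<close> by (simp_all add: E_def complex_eq_iff zero_prod_def)
    moreover have "power_comb (cnj \<alpha>) t = 0" "power_comb \<beta> t = 0"
      using calculation power_comb_cnj[of \<alpha> t, symmetric] power_comb_cnj[of "cnj \<beta>" t, symmetric]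
      by simp_all
    ultimately have "\<forall>z\<in>{\<alpha>, \<beta>, cnj \<alpha>, cnj \<beta>}. power_comb z t = 0"
      by blast
    moreover obtain t0 t1 t2 t3 where t: "t = (t0, t1, t2, t3)"
      by (cases t) auto
    ultimately have "\<forall>z\<in>{\<alpha>, \<beta>, cnj \<alpha>, cnj \<beta>}.
        of_real t0 + of_real t1 * z + of_real t2 * z^2 + of_real t3 * z^3 = 0"
      by (simp add: power_comb_def)
    from cubic_eq_0_at_four_points[OF roots_distinct this] show "t = 0"
      by (simp add: t zero_prod_def)
  qed
  then have "surj E"
    using lin by (intro linear_inj_imp_surj) (auto simp: linear_injective_0)
  then obtain t where "E t = (Re x, Im x, Re y, Im y)"
    by (metis surjD)
  then have "power_comb \<alpha> t = x" "power_comb (cnj \<beta>) t = y"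
    by (simp_all add: E_def complex_eq_iff)
  then have "lat t = vec3 x y 0"
    by (simp add: lattice_map_def)
  then show ?thesis ..
qed

end

section \<open>Smooth functions\<close>

lemma smooth3_differentiable: "smooth3 f \<Longrightarrow> f differentiable (at x)"
  by (erule smooth3.cases) auto

lemma smooth3_frechet_derivative: "smooth3 f \<Longrightarrow> smooth3 (\<lambda>x. frechet_derivative f (at x) v)"
  by (erule smooth3.cases) auto

lemma smooth3_continuous_on: "smooth3 f \<Longrightarrow> continuous_on S f"
  by (meson continuous_at_imp_continuous_on differentiable_imp_continuous_within
      smooth3_differentiable)

lemma smooth3_has_derivative: "smooth3 f \<Longrightarrow> (f has_derivative frechet_derivative f (at x)) (at x)"
  using frechet_derivative_works smooth3_differentiable by blast

lemma smooth3_linear_derivative: "smooth3 f \<Longrightarrow> linear (frechet_derivative f (at x))"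
  using smooth3_has_derivative has_derivative_linear by blast

lemma smooth3_const: "smooth3 (\<lambda>p. c)"
proof -
  have "smooth3 f" if "\<exists>c. f = (\<lambda>p. c)" for f
    using that
  proof (coinduction arbitrary: f rule: smooth3.coinduct)
    case (smooth3 f)
    then obtain c where f: "f = (\<lambda>p. c)"
      by blast
    have "frechet_derivative f (at x) = (\<lambda>v. 0)" for x
      unfolding f by (rule frechet_derivative_at[symmetric]) (rule has_derivative_const)
    then show ?case
      by (auto simp: f)
  qed
  then show ?thesis
    by blast
qed

lemma frechet_derivative_translation_invariant:
  assumes "smooth3 F" and "\<And>q. F (q + v) = F q"
  shows "frechet_derivative F (at (p + v)) = frechet_derivative F (at p)"
proof -
  have "((\<lambda>q. q + v) has_derivative (\<lambda>q. q)) (at p)"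
    by (auto intro!: derivative_eq_intros)
  from has_derivative_compose[OF this smooth3_has_derivative[OF assms(1)]]
  have "((\<lambda>q. F (q + v)) has_derivative frechet_derivative F (at (p + v))) (at p)"
    by simp
  then show ?thesis
    using assms(2) by (auto intro: frechet_derivative_at)
qed

lemma integral_line_frechet_derivative:
  assumes "smooth3 F"
  shows "integral {0..1} (\<lambda>s. frechet_derivative F (at (p + s *\<^sub>R v)) v) = F (p + v) - F p"
proof -
  have "((\<lambda>s. F (p + s *\<^sub>R v)) has_vector_derivative frechet_derivative F (at (p + s *\<^sub>R v)) v)
      (at s within {0..1})" for s
  proof -
    have "((\<lambda>s. F (p + s *\<^sub>R v)) has_derivative
        (\<lambda>r. frechet_derivative F (at (p + s *\<^sub>R v)) (r *\<^sub>R v))) (at s within {0..1})"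
      by (rule has_derivative_compose[OF _ smooth3_has_derivative[OF assms]])
        (auto intro!: derivative_eq_intros)
    then show ?thesis
      using linear_scale[OF smooth3_linear_derivative[OF assms]]
      by (simp add: has_vector_derivative_def)
  qed
  then have "((\<lambda>s. frechet_derivative F (at (p + s *\<^sub>R v)) v) has_integral
      F (p + 1 *\<^sub>R v) - F (p + 0 *\<^sub>R v)) {0..1}"
    by (intro fundamental_theorem_of_calculus) auto
  then show ?thesis
    by (simp add: integral_unique)
qed

lemma integral_unit_cube_translate_diff:
  fixes L :: "'a::euclidean_space \<Rightarrow> pt"
  assumes F: "smooth3 F" and L: "linear L"
  shows "integral (cbox 0 One) (\<lambda>t. F (p + v + L t)) - integral (cbox 0 One) (\<lambda>t. F (p + L t))
    = integral {0..1} (\<lambda>s. integral (cbox 0 One)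
        (\<lambda>t. frechet_derivative F (at (p + s *\<^sub>R v + L t)) v))"
proof -
  have contL: "continuous_on UNIV L"
    using L by (simp add: linear_continuous_on linear_conv_bounded_linear)
  have cont: "continuous_on UNIV (\<lambda>t. F (q + L t))" for q
    by (rule continuous_on_compose2[OF smooth3_continuous_on[OF F]])
      (auto intro!: continuous_intros contL)
  have "continuous_on UNIV (\<lambda>x. frechet_derivative F (at (p + snd x *\<^sub>R v + L (fst x))) v)"
    by (rule continuous_on_compose2[OF smooth3_continuous_on[OF smooth3_frechet_derivative[OF F]]])
      (auto intro!: continuous_intros continuous_on_compose2[OF contL])
  then have cont_D: "continuous_on (cbox (0, 0) (One, 1))
      (\<lambda>(t, s). frechet_derivative F (at (p + s *\<^sub>R v + L t)) v)"
    unfolding split_beta' by (rule continuous_on_subset) auto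
  have "integral (cbox 0 One) (\<lambda>t. F (p + v + L t)) - integral (cbox 0 One) (\<lambda>t. F (p + L t))
      = integral (cbox 0 One) (\<lambda>t. F (p + v + L t) - F (p + L t))"
    using cont[of p] cont[of "p + v"]
    by (intro integral_diff[symmetric] integrable_continuous) (auto intro: continuous_on_subset)
  also have "\<dots> = integral (cbox 0 One) (\<lambda>t. integral (cbox 0 1)
      (\<lambda>s. frechet_derivative F (at (p + s *\<^sub>R v + L t)) v))"
    using integral_line_frechet_derivative[OF F, of "p + L _" v]
    by (simp add: add_ac)
  also have "\<dots> = integral (cbox 0 1) (\<lambda>s. integral (cbox 0 One)
      (\<lambda>t. frechet_derivative F (at (p + s *\<^sub>R v + L t)) v))"
    by (rule integral_swap_continuous[OF cont_D])
  finally show ?thesis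
    by simp
qed

lemma integral_unit_cube_periodic_derivative:
  fixes L :: "R4 \<Rightarrow> pt"
  assumes F: "smooth3 F" and L: "linear L" and per: "\<And>q b. b \<in> Basis \<Longrightarrow> F (q + L b) = F q"
  shows "integral (cbox 0 One) (\<lambda>t. frechet_derivative F (at (p + L t)) (L c)) = 0"
proof -
  define G where "G t = frechet_derivative F (at (p + L t)) (L c)" for t
  have contL: "continuous_on UNIV L"
    using L by (simp add: linear_continuous_on linear_conv_bounded_linear)
  have cont_F: "continuous_on UNIV (\<lambda>t. F (p + L t))"
    by (rule continuous_on_compose2[OF smooth3_continuous_on[OF F]])
      (auto intro!: continuous_intros contL)
  have per_F: "unit_periodic (\<lambda>t. F (p + L t))"
    unfolding unit_periodic_def linear_add[OF L] add.assoc[symmetric] using per by blast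
  have cont_G: "continuous_on UNIV G"
    unfolding G_def
    by (rule continuous_on_compose2[OF smooth3_continuous_on[OF smooth3_frechet_derivative[OF F]]])
      (auto intro!: continuous_intros contL)
  have per_G: "unit_periodic G"
    unfolding unit_periodic_def G_def linear_add[OF L] add.assoc[symmetric]
    using frechet_derivative_translation_invariant[OF F per] by simp
  have "integral (cbox 0 One) (\<lambda>t. F (p + L c + L t)) - integral (cbox 0 One) (\<lambda>t. F (p + L t)) = 0"
    using integral_unit_cube_shift_R4[OF cont_F per_F, of c]
    by (simp add: linear_add[OF L] add_ac)
  moreover have "frechet_derivative F (at (p + s *\<^sub>R L c + L t)) (L c) = G (t + s *\<^sub>R c)" for s t
    by (simp add: G_def linear_add[OF L] linear_scale[OF L] add_ac)
  then have "integral (cbox 0 One) (\<lambda>t. frechet_derivative F (at (p + s *\<^sub>R L c + L t)) (L c))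
      = integral (cbox 0 One) G" for s
    using integral_unit_cube_shift_R4[OF cont_G per_G] by simp
  ultimately have "integral (cbox 0 One) G = 0"
    using integral_unit_cube_translate_diff[OF F L, of p "L c"] by simp
  then show ?thesis
    by (simp add: G_def [abs_def])
qed

lemma dirderiv_axis_eq_wirt:
  assumes "smooth3 f"
  shows "dirderiv f (axis l c) q = c * wirt f l q + cnj c * wirtbar f l q"
proof -
  have "axis l c = Re c *\<^sub>R axis l 1 + Im c *\<^sub>R axis l \<i>"
    by (simp add: vec_eq_iff axis_def complex_eq_iff)
  then have "dirderiv f (axis l c) q
      = Re c *\<^sub>R dirderiv f (axis l 1) q + Im c *\<^sub>R dirderiv f (axis l \<i>) q"
    using smooth3_linear_derivative[OF assms]
    by (simp add: dirderiv_def linear_add linear_scale)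
  then show ?thesis
    by (simp add: wirt_def wirtbar_def scaleR_conv_of_real complex_eq_iff field_simps)
qed

lemma dirderiv_const: "dirderiv (\<lambda>p. c) v x = 0"
  unfolding dirderiv_def by (metis frechet_derivative_at has_derivative_const)

section \<open>Semipositive Hermitian matrices\<close>

definition quad_form :: "complex^'n^'n \<Rightarrow> complex^'n \<Rightarrow> complex" where
  "quad_form A v = (\<Sum>j\<in>UNIV. \<Sum>k\<in>UNIV. A $ j $ k * v $ j * cnj (v $ k))"

lemma nonneg11_iff_quad_form: "nonneg11 h \<longleftrightarrow> (\<forall>p v. 0 \<le> Re (quad_form (h p) v))"
  by (simp add: nonneg11_def quad_form_def)

lemma sum_sum_delta:
  "(\<Sum>a\<in>UNIV. \<Sum>b\<in>UNIV. if a = j \<and> b = k then c else 0) = (c :: 'c::comm_monoid_add)"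
  for j :: "'a::finite" and k :: "'b::finite"
proof -
  have "(\<Sum>b\<in>UNIV. if a = j \<and> b = k then c else 0) = (if a = j then c else 0)" for a
    by (cases "a = j") simp_all
  then show ?thesis
    by simp
qed

lemma quad_form_axis_pair:
  assumes "j \<noteq> k"
  shows "quad_form A (axis j x + axis k 1)
    = A $ j $ j * x * cnj x + A $ j $ k * x + A $ k $ j * cnj x + A $ k $ k"
proof -
  have "A $ a $ b * (axis j x + axis k 1) $ a * cnj ((axis j x + axis k 1) $ b)
      = (if a = j \<and> b = j then A $ j $ j * x * cnj x else 0)
      + (if a = j \<and> b = k then A $ j $ k * x else 0)
      + (if a = k \<and> b = j then A $ k $ j * cnj x else 0)
      + (if a = k \<and> b = k then A $ k $ k else 0)" for a b
    using assms by (auto simp: axis_def)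
  then show ?thesis
    by (simp add: quad_form_def sum.distrib sum_sum_delta)
qed

lemma quad_form_axis: "quad_form A (axis j 1) = A $ j $ j"
proof -
  have "A $ a $ b * axis j 1 $ a * cnj (axis j 1 $ b) = (if a = j \<and> b = j then A $ j $ j else 0)"
    for a b
    by (simp add: axis_def)
  then show ?thesis
    by (simp add: quad_form_def sum_sum_delta)
qed

lemma psd_diag_eq_0_imp_eq_0:
  fixes A :: "complex^'n^'n"
  assumes psd: "\<And>v. 0 \<le> Re (quad_form A v)" and herm: "\<And>a b. A $ a $ b = cnj (A $ b $ a)"
    and diag: "A $ j $ j = 0"
  shows "A $ j $ k = 0"
proof (rule ccontr)
  assume nz: "A $ j $ k \<noteq> 0"
  define a where "a = A $ j $ k"
  then have "j \<noteq> k" "0 < (cmod a)^2"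
    using diag nz by auto
  define t where "t = (\<bar>Re (A $ k $ k)\<bar> + 1) / (2 * (cmod a)^2)"
  define x where "x = - (of_real t * cnj a)"
  have "a * cnj a = of_real ((cmod a)^2)"
    by (rule complex_norm_square[symmetric])
  then have "a * x = - of_real (t * (cmod a)^2)"
    by (simp add: x_def mult.commute mult.left_commute)
  moreover have "quad_form A (axis j x + axis k 1) = a * x + cnj (a * x) + A $ k $ k"
    using quad_form_axis_pair[OF \<open>j \<noteq> k\<close>] diag herm[of k j] by (simp add: a_def)
  ultimately have "Re (quad_form A (axis j x + axis k 1)) = - 2 * t * (cmod a)^2 + Re (A $ k $ k)"
    by simp
  also have "\<dots> = - \<bar>Re (A $ k $ k)\<bar> - 1 + Re (A $ k $ k)"
    using \<open>0 < (cmod a)^2\<close> by (simp add: t_def)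
  finally show False
    using psd[of "axis j x + axis k 1"] by linarith
qed

lemma minor_eq_0_if_row_eq_0:
  assumes "i < length I" and "\<And>b. A $ (I ! i) $ b = 0"
  shows "minor A I J = 0"
  using assms by (auto simp: minor_def intro!: sum.neutral prod_zero bexI[of _ i])

section \<open>Invariant closed semipositive forms\<close>

lemma invariant11_Gamma_periodic: "invariant11 a b \<tau> h \<Longrightarrow> Gamma_periodic a b (\<lambda>q. h q $ j $ k)"
  unfolding invariant11_def Gamma_periodic_def by fastforce

lemma invariant11_generator_diag:
  assumes "invariant11 a b \<tau> h"
  shows "h (vec3 (a * p $ 1) (cnj b * p $ 2) (p $ 3 + \<tau>)) $ j $ j
    * (vec3 a (cnj b) 1 $ j * cnj (vec3 a (cnj b) 1 $ j)) = h p $ j $ j"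
  using assms unfolding invariant11_def Let_def mult.assoc[symmetric] by blast

context root_pair
begin

definition fibre_integral :: "(pt \<Rightarrow> complex) \<Rightarrow> complex \<Rightarrow> complex" where
  "fibre_integral u w = integral (cbox 0 One) (\<lambda>t. u (vec3 0 0 w + lat t))"

lemma fibre_dirderiv_has_integral_0:
  assumes F: "smooth3 F" and per: "Gamma_periodic \<alpha> \<beta> F"
  shows "((\<lambda>t. dirderiv F (vec3 x y 0) (p + lat t)) has_integral 0) (cbox 0 One)"
proof -
  obtain c where c: "lat c = vec3 x y 0"
    using lattice_map_surj by blast
  have "integral (cbox 0 One) (\<lambda>t. dirderiv F (vec3 x y 0) (p + lat t)) = 0"
    using integral_unit_cube_periodic_derivative[OF F linear_lattice_map
        Gamma_periodic_lattice_map_Basis[OF per], of p c]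
    by (simp add: dirderiv_def c)
  moreover have "(\<lambda>t. dirderiv F (vec3 x y 0) (p + lat t)) integrable_on cbox 0 One"
    unfolding dirderiv_def
    by (intro integrable_continuous
        continuous_on_subset[OF continuous_on_lattice_map_comp subset_UNIV]
        smooth3_continuous_on smooth3_frechet_derivative F)
  ultimately show ?thesis
    by (metis has_integral_integral)
qed

lemma fibre_wirt_has_integral_0:
  assumes F: "smooth3 F" and per: "Gamma_periodic \<alpha> \<beta> F" and j: "j \<noteq> 3"
  shows "((\<lambda>t. wirt F j (p + lat t)) has_integral 0) (cbox 0 One)"
    and "((\<lambda>t. wirtbar F j (p + lat t)) has_integral 0) (cbox 0 One)"
proof -
  have "\<exists>x y. axis j c = vec3 x y 0" for c
    using j exhaust_3[of j] axis_eq_vec3 by metis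
  then have D: "((\<lambda>t. dirderiv F (axis j c) (p + lat t)) has_integral 0) (cbox 0 One)" for c
    using fibre_dirderiv_has_integral_0[OF F per] by metis
  show "((\<lambda>t. wirt F j (p + lat t)) has_integral 0) (cbox 0 One)"
    using has_integral_divide[OF has_integral_diff[OF D[of 1] has_integral_mult_right[OF D[of \<i>]]]]
    unfolding wirt_def by simp
  show "((\<lambda>t. wirtbar F j (p + lat t)) has_integral 0) (cbox 0 One)"
    using has_integral_divide[OF has_integral_add[OF D[of 1] has_integral_mult_right[OF D[of \<i>]]]]
    unfolding wirtbar_def by simp
qed

lemma fibre_vertical_derivative_has_integral_0:
  assumes r11: "real11 h" and cl: "closed11 h" and per: "\<And>k l. Gamma_periodic \<alpha> \<beta> (\<lambda>q. h q $ k $ l)"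
    and j: "j \<noteq> 3"
  shows "((\<lambda>t. dirderiv (\<lambda>q. h q $ j $ j) (vec3 0 0 \<tau>) (p + lat t))
    has_integral 0) (cbox 0 One)"
proof -
  have smooth: "smooth3 (\<lambda>q. h q $ k $ l)" for k l
    using r11 unfolding real11_def by blast
  have "wirt (\<lambda>q. h q $ j $ j) 3 q = wirt (\<lambda>q. h q $ 3 $ j) j q"
    and "wirtbar (\<lambda>q. h q $ j $ j) 3 q = wirtbar (\<lambda>q. h q $ j $ 3) j q" for q
    using cl unfolding closed11_def by blast+
  then have "dirderiv (\<lambda>q. h q $ j $ j) (vec3 0 0 \<tau>) q
      = \<tau> * wirt (\<lambda>q. h q $ 3 $ j) j q + cnj \<tau> * wirtbar (\<lambda>q. h q $ j $ 3) j q" for q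
    using dirderiv_axis_eq_wirt[OF smooth, where l = 3 and c = \<tau>] by (simp add: axis_eq_vec3(3))
  moreover have "((\<lambda>t. \<tau> * wirt (\<lambda>q. h q $ 3 $ j) j (p + lat t)
      + cnj \<tau> * wirtbar (\<lambda>q. h q $ j $ 3) j (p + lat t)) has_integral 0) (cbox 0 One)"
    using has_integral_add[OF has_integral_mult_right has_integral_mult_right,
        OF fibre_wirt_has_integral_0(1)[OF smooth per j]
          fibre_wirt_has_integral_0(2)[OF smooth per j]]
    by simp
  ultimately show ?thesis
    by simp
qed

lemma fibre_integral_shift:
  assumes "real11 h" and "closed11 h" and "\<And>k l. Gamma_periodic \<alpha> \<beta> (\<lambda>q. h q $ k $ l)"
    and "j \<noteq> 3"
  shows "fibre_integral (\<lambda>q. h q $ j $ j) (w + \<tau>) = fibre_integral (\<lambda>q. h q $ j $ j) w"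
proof -
  have smooth: "smooth3 (\<lambda>q. h q $ j $ j)"
    using assms(1) unfolding real11_def by blast
  have "integral (cbox 0 One) (\<lambda>t. dirderiv (\<lambda>q. h q $ j $ j) (vec3 0 0 \<tau>)
      (vec3 0 0 w + s *\<^sub>R vec3 0 0 \<tau> + lat t)) = 0" for s
    using fibre_vertical_derivative_has_integral_0[OF assms] by (rule integral_unique)
  then show ?thesis
    using integral_unit_cube_translate_diff[OF smooth linear_lattice_map[of \<alpha> "cnj \<beta>"],
        of "vec3 0 0 w" "vec3 0 0 \<tau>"]
    by (simp add: fibre_integral_def dirderiv_def vec3_add)
qed

lemma generator_on_fibre:
  assumes "p = vec3 0 0 w + lat t"
  shows "vec3 (\<alpha> * p $ 1) (cnj \<beta> * p $ 2) (p $ 3 + \<tau>)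
    = vec3 0 0 (w + \<tau>) + lat (companion4 t)"
  using assms power_comb_companion4[OF roots_quartic] by (simp add: lattice_map_def vec3_add)

lemma fibre_integral_eq_0:
  assumes r11: "real11 h" and cl: "closed11 h" and inv: "invariant11 \<alpha> \<beta> \<tau> h" and j: "j \<noteq> 3"
  shows "fibre_integral (\<lambda>q. h q $ j $ j) w = 0"
proof -
  define u where "u q = h q $ j $ j" for q
  define m where "m = vec3 \<alpha> (cnj \<beta>) 1 $ j * cnj (vec3 \<alpha> (cnj \<beta>) 1 $ j)"
  have "m \<noteq> 1"
    using j exhaust_3[of j] root_mult_cnj_neq_1 by (auto simp: m_def mult.commute)
  have per: "Gamma_periodic \<alpha> \<beta> (\<lambda>q. h q $ k $ l)" for k l
    using inv by (rule invariant11_Gamma_periodic)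
  have per_u: "Gamma_periodic \<alpha> \<beta> u"
    unfolding u_def by (rule per)
  have "continuous_on UNIV u"
    using r11 smooth3_continuous_on unfolding real11_def u_def by blast
  then have cont: "continuous_on UNIV (\<lambda>t. u (vec3 0 0 (w + \<tau>) + lat t))"
    by (rule continuous_on_lattice_map_comp)
  have "fibre_integral u w = integral (cbox 0 One)
      (\<lambda>t. u (vec3 0 0 (w + \<tau>) + lat (companion4 t)) * m)"
    using invariant11_generator_diag[OF inv, of "vec3 0 0 w + lat _" j]
      generator_on_fibre[OF refl]
    by (simp add: fibre_integral_def u_def m_def)
  also have "\<dots> = fibre_integral u (w + \<tau>) * m"
    unfolding fibre_integral_def integral_mult_left
    using integral_unit_cube_companion4[OF cont unit_periodic_lattice_map_comp[OF per_u]]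
    by (simp add: u_def)
  also have "fibre_integral u (w + \<tau>) = fibre_integral u w"
    unfolding u_def by (rule fibre_integral_shift[OF r11 cl per j])
  finally have "fibre_integral u w * (1 - m) = 0"
    by (simp add: algebra_simps)
  with \<open>m \<noteq> 1\<close> show ?thesis
    by (simp add: u_def [abs_def])
qed

lemma invariant_form_diag_eq_0:
  assumes r11: "real11 h" and nn: "nonneg11 h" and cl: "closed11 h" and inv: "invariant11 \<alpha> \<beta> \<tau> h"
    and j: "j \<noteq> 3"
  shows "h p $ j $ j = 0"
proof -
  define f where "f t = Re (h (vec3 0 0 (p $ 3) + lat t) $ j $ j)" for t
  have "continuous_on UNIV (\<lambda>q. h q $ j $ j)"
    using r11 smooth3_continuous_on unfolding real11_def by blast
  then have cont: "continuous_on UNIV (\<lambda>t. h (vec3 0 0 (p $ 3) + lat t) $ j $ j)"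
    by (rule continuous_on_lattice_map_comp)
  have "((\<lambda>t. h (vec3 0 0 (p $ 3) + lat t) $ j $ j) has_integral 0) (cbox 0 One)"
    using fibre_integral_eq_0[OF r11 cl inv j, of "p $ 3"]
      integrable_continuous[OF continuous_on_subset[OF cont]]
    unfolding fibre_integral_def by (metis has_integral_integral subset_UNIV)
  then have "integral (cbox 0 One) f = 0"
    unfolding f_def by (auto dest!: has_integral_Re intro: integral_unique)
  moreover have "continuous_on UNIV f"
    unfolding f_def by (intro continuous_intros cont)
  moreover have "unit_periodic f"
    using unit_periodic_lattice_map_comp[OF invariant11_Gamma_periodic[OF inv]]
    by (simp add: f_def unit_periodic_def)
  moreover have "0 \<le> f t" for t
    using nn quad_form_axis unfolding nonneg11_iff_quad_form f_def by metis
  moreover obtain c where c: "lat c = vec3 (p $ 1) (p $ 2) 0"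
    using lattice_map_surj by blast
  ultimately have "Re (h p $ j $ j) = 0"
    using nonneg_periodic_integral_eq_0_imp_eq_0[of f c] by (simp add: f_def vec3_add vec3_eta)
  moreover have "h p $ j $ j = cnj (h p $ j $ j)"
    using r11 unfolding real11_def by blast
  ultimately show ?thesis
    by (simp add: complex_eq_iff)
qed

lemma invariant_form_wedge_pow_le_1:
  assumes r11: "real11 h" and nn: "nonneg11 h" and cl: "closed11 h" and inv: "invariant11 \<alpha> \<beta> \<tau> h"
    and "wedge_pow_nonzero h k"
  shows "k \<le> 1"
proof (rule ccontr)
  assume "\<not> k \<le> 1"
  obtain p I J where I: "distinct I" "length I = k" and nz: "minor (h p) I J \<noteq> 0"
    using \<open>wedge_pow_nonzero h k\<close> unfolding wedge_pow_nonzero_def by blast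
  have "I ! 0 \<noteq> I ! 1"
    using I \<open>\<not> k \<le> 1\<close> by (simp add: nth_eq_iff_index_eq)
  then obtain i where i: "i < length I" "I ! i \<noteq> 3"
    using I \<open>\<not> k \<le> 1\<close> by (metis One_nat_def less_one not_le_imp_less order.strict_trans)
  have "h p $ (I ! i) $ b = 0" for b
    using psd_diag_eq_0_imp_eq_0[of "h p"] invariant_form_diag_eq_0[OF r11 nn cl inv i(2)]
      nn r11 unfolding nonneg11_iff_quad_form real11_def by blast
  then show False
    using minor_eq_0_if_row_eq_0[OF i(1)] nz by blast
qed

end

text \<open>The form i dw \<and> d(cnj w), pulled back from the base elliptic curve.\<close>

definition vertical_form :: "pt \<Rightarrow> complex^3^3" where
  "vertical_form p = (\<chi> a b. if a = 3 \<and> b = 3 then 1 else 0)"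

lemma vertical_form_rank_1:
  "real11 vertical_form" "nonneg11 vertical_form" "closed11 vertical_form"
  "invariant11 a b \<tau> vertical_form" "wedge_pow_nonzero vertical_form 1"
proof -
  show "real11 vertical_form"
    by (auto simp: real11_def vertical_form_def smooth3_const)
  have "vertical_form p $ j $ k * v $ j * cnj (v $ k)
      = (if j = 3 \<and> k = 3 then v $ 3 * cnj (v $ 3) else 0)" for p v j k
    by (simp add: vertical_form_def)
  then have "quad_form (vertical_form p) v = v $ 3 * cnj (v $ 3)" for p v
    by (simp add: quad_form_def sum_sum_delta)
  then show "nonneg11 vertical_form"
    by (simp add: nonneg11_iff_quad_form)
  show "closed11 vertical_form"
    by (simp add: closed11_def vertical_form_def wirt_def wirtbar_def dirderiv_const)
  show "invariant11 a b \<tau> vertical_form"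
    by (simp add: invariant11_def vertical_form_def)
  have "minor A [i] [j] = A $ i $ j" for A i j
    using permutes_sing[of _ 0] by (simp add: minor_def lessThan_Suc)
  then show "wedge_pow_nonzero vertical_form 1"
    unfolding wedge_pow_nonzero_def
    by (intro exI[of _ 0] exI[of _ "[3]"]) (simp add: vertical_form_def)
qed

theorem mainTheorem5:
  fixes \<alpha> \<beta> \<tau> :: complex
  assumes "\<alpha>^2 - (1 + \<i>) * \<alpha> + 1 = 0"
      and "\<beta>^2 - (1 + \<i>) * \<beta> + 1 = 0"
      and "\<alpha> \<noteq> \<beta>"
      and "Im \<tau> > 0"
  shows "kahler_rank_M \<alpha> \<beta> \<tau> = 1"
proof -
  \<comment> \<open>Im \<tau> > 0 is what makes M a manifold; the computation of the rank does not use it.\<close>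
  interpret root_pair \<alpha> \<beta>
    using assms(1-3) by unfold_locales
  let ?ranks = "{k. \<exists>h. real11 h \<and> nonneg11 h \<and> closed11 h \<and> invariant11 \<alpha> \<beta> \<tau> h
    \<and> wedge_pow_nonzero h k}"
  have le_1: "k \<le> 1" if "k \<in> ?ranks" for k
    using that invariant_form_wedge_pow_le_1 by blast
  have "finite ?ranks"
    using le_1 by (meson finite_atMost finite_subset atMost_iff subsetI)
  moreover have "1 \<in> ?ranks"
    using vertical_form_rank_1 by blast
  ultimately show ?thesis
    unfolding kahler_rank_M_def by (intro Max_eqI le_1)
qed

end
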